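(* Let $\mathbf v\in\mathbb R_{<0}^{n\times m}$. For every Pareto optimal utility profile $\mathbf u\in\mathcal U^*(\mathbf v)$ there exists an allocation $\mathbf z$ with $\mathbf u(\mathbf z)=\mathbf u$ and $G_{\mathbf z}\in\mathrm{MWW}(\mathbf v)$. Consequently, for every $\mathbf b\in\mathbb R^n_{<0}$ and every competitive utility profile $\mathbf u\in\mathrm{CU}(\mathbf v,\mathbf b)$ there is a competitive allocation $\mathbf z$ with $\mathbf u(\mathbf z)=\mathbf u$ and $G_{\mathbf z}\in\mathrm{MWW}(\mathbf v)$.
   Context: Setup: agents $[n]$, chores $[m]$, allocations $\mathbf z\in\mathbb R^{n\times m}_{\ge0}$ with column sums $1$, $u_i(\mathbf z_i)=\sum_jv_{i,j}z_{i,j}$. $\mathcal U^*(\mathbf v)$ is the set of utility profiles $\mathbf u(\mathbf z)$ of Pareto optimal allocations $\mathbf z$. Consumption graph $G_{\mathbf z}$: edge $(i,j)$ iff $z_{i,j}>0$. $G_\tau(\mathbf v)$ for $\tau\in\mathbb R^n_{>0}$: edge $(i,j)$ iff $\tau_i|v_{i,j}|\le\tau_{i'}|v_{i',j}|$ for all $i'$; $\mathrm{MWW}(\mathbf v)=\{G_\tau(\mathbf v):\tau\in\mathbb R^n_{>0}\}$. Competitive allocation for budgets $\mathbf b\in\mathbb R^n_{<0}$: there exist prices $\mathbf p\in\mathbb R^m_{<0}$ such that each $\mathbf z_i$ maximizes $u_i$ over bundles $\mathbf x\in\mathbb R^m_{\ge0}$ with $\sum_jp_jx_j\le b_i$; $\mathrm{CU}(\mathbf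 v,\mathbf b)$ is the set of their utility profiles. *)

theory Defs
  imports Main "HOL.Real"
begin

text \<open>Agents are 0..<n, chores are 0..<m. Valuations, allocations, prices, budgets
  and weights are functions on nat; only values at indices in range matter.\<close>

definition allocation :: "nat \<Rightarrow> nat \<Rightarrow> (nat \<Rightarrow> nat \<Rightarrow> real) \<Rightarrow> bool" where
  "allocation n m z \<longleftrightarrow> (\<forall>i<n. \<forall>j<m. z i j \<ge> 0) \<and> (\<forall>j<m. (\<Sum>i<n. z i j) = 1)"

definition bundle_util :: "nat \<Rightarrow> (nat \<Rightarrow> nat \<Rightarrow> real) \<Rightarrow> nat \<Rightarrow> (nat \<Rightarrow> real) \<Rightarrow> real" where
  "bundle_util m v i x = (\<Sum>j<m. v i j * x j)"

definition profile :: "nat \<Rightarrow> nat \<Rightarrow> (nat \<Rightarrow> nat \<Rightarrow> real) \<Rightarrow> (nat \<Rightarrow> nat \<Rightarrow> real) \<Rightarrow> (nat \<Rightarrow> real)" where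
  "profile n m v z = (\<lambda>i. if i < n then bundle_util m v i (z i) else 0)"

definition pareto_optimal :: "nat \<Rightarrow> nat \<Rightarrow> (nat \<Rightarrow> nat \<Rightarrow> real) \<Rightarrow> (nat \<Rightarrow> nat \<Rightarrow> real) \<Rightarrow> bool" where
  "pareto_optimal n m v z \<longleftrightarrow> allocation n m z \<and>
     \<not> (\<exists>z'. allocation n m z' \<and>
            (\<forall>i<n. profile n m v z' i \<ge> profile n m v z i) \<and>
            (\<exists>i<n. profile n m v z' i > profile n m v z i))"

definition PO_profiles :: "nat \<Rightarrow> nat \<Rightarrow> (nat \<Rightarrow> nat \<Rightarrow> real) \<Rightarrow> (nat \<Rightarrow> real) set" where
  "PO_profiles n m v = {profile n m v z | z. pareto_optimal n m v z}"

definition cons_graph :: "nat \<Rightarrow> nat \<Rightarrow> (nat \<Rightarrow> nat \<Rightarrow> real) \<Rightarrow> (nat \<times> nat) set" where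
  "cons_graph n m z = {(i, j). i < n \<and> j < m \<and> z i j > 0}"

definition tau_graph :: "nat \<Rightarrow> nat \<Rightarrow> (nat \<Rightarrow> real) \<Rightarrow> (nat \<Rightarrow> nat \<Rightarrow> real) \<Rightarrow> (nat \<times> nat) set" where
  "tau_graph n m \<tau> v = {(i, j). i < n \<and> j < m \<and>
      (\<forall>i'<n. \<tau> i * \<bar>v i j\<bar> \<le> \<tau> i' * \<bar>v i' j\<bar>)}"

definition MWW :: "nat \<Rightarrow> nat \<Rightarrow> (nat \<Rightarrow> nat \<Rightarrow> real) \<Rightarrow> (nat \<times> nat) set set" where
  "MWW n m v = {tau_graph n m \<tau> v | \<tau>. \<forall>i<n. \<tau> i > 0}"

definition competitive :: "nat \<Rightarrow> nat \<Rightarrow> (nat \<Rightarrow> nat \<Rightarrow> real) \<Rightarrow> (nat \<Rightarrow> real) \<Rightarrow> (nat \<Rightarrow> nat \<Rightarrow> real) \<Rightarrow> bool" where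
  "competitive n m v b z \<longleftrightarrow> allocation n m z \<and>
     (\<exists>p. (\<forall>j<m. p j < 0) \<and>
        (\<forall>i<n. (\<Sum>j<m. p j * z i j) \<le> b i \<and>
           (\<forall>x. (\<forall>j<m. x j \<ge> 0) \<and> (\<Sum>j<m. p j * x j) \<le> b i \<longrightarrow>
                bundle_util m v i x \<le> bundle_util m v i (z i))))"

definition CU :: "nat \<Rightarrow> nat \<Rightarrow> (nat \<Rightarrow> nat \<Rightarrow> real) \<Rightarrow> (nat \<Rightarrow> real) \<Rightarrow> (nat \<Rightarrow> real) set" where
  "CU n m v b = {profile n m v z | z. competitive n m v b z}"

end

theory Submission
  imports Defs
begin

text \<open>Among the allocations realising a Pareto optimal profile choose one, \<open>z\<close>, whose
  consumption graph \<open>S\<close> is maximal. Moving chore \<open>j\<close> from an agent \<open>i\<close> with \<open>(i, j) \<in> S\<close> to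
  any agent \<open>i'\<close> trades utility at the rate \<open>|v i j| / |v i' j|\<close>; along a cycle of such moves
  the rates multiply to at most \<open>1\<close> (otherwise \<open>z\<close> is not Pareto optimal), and strictly less
  than \<open>1\<close> when some move leaves \<open>S\<close> (otherwise the support of \<open>z\<close> could be enlarged
  without changing utilities). Such a system of multiplicative difference constraints has a
  positive solution \<open>\<tau>\<close>, found by eliminating agents one at a time, and then \<open>S = G\<^sub>\<tau>(v)\<close>.
  For the competitive part, the first welfare theorem makes every competitive allocation
  Pareto optimal, and any allocation with the same utilities is supported by the same prices.\<close>

definition flagged_le :: "bool \<Rightarrow> real \<Rightarrow> real \<Rightarrow> bool" where
  "flagged_le s x y \<longleftrightarrow> x \<le> y \<and> (s \<longrightarrow> x < y)"

lemma flagged_le_mult_left_iff: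
  "0 < c \<Longrightarrow> flagged_le s (c * x) y \<longleftrightarrow> flagged_le s x (y / c)"
  by (auto simp: flagged_le_def pos_le_divide_eq pos_less_divide_eq mult.commute)

lemma flagged_le_mult_right_iff:
  "0 < t \<Longrightarrow> flagged_le s (c * t) (d * t) \<longleftrightarrow> flagged_le s c d"
  by (simp add: flagged_le_def)

text \<open>An arc \<open>(a, b, c, s)\<close> encodes the constraint \<open>c * \<tau> a \<le> \<tau> b\<close>, strict if \<open>s\<close>.\<close>

type_synonym 'a arc = "'a \<times> 'a \<times> real \<times> bool"

inductive_set walks :: "'a arc set \<Rightarrow> 'a arc set" for A where
  arc: "(a,b,c,s) \<in> A \<Longrightarrow> (a,b,c,s) \<in> walks A"
| append: "(a,b,c1,s1) \<in> walks A \<Longrightarrow> (b,d,c2,s2) \<in> walks A \<Longrightarrow> (a,d,c1*c2,s1\<or>s2) \<in> walks A"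

lemmas walks_induct = walks.induct[split_format (complete)]

definition nonexpanding_cycles :: "'a arc set \<Rightarrow> bool" where
  "nonexpanding_cycles A \<longleftrightarrow> (\<forall>a c s. (a,a,c,s) \<in> walks A \<longrightarrow> flagged_le s c 1)"

definition is_potential :: "('a \<Rightarrow> real) \<Rightarrow> 'a arc set \<Rightarrow> bool" where
  "is_potential \<tau> A \<longleftrightarrow> (\<forall>a b c s. (a,b,c,s) \<in> A \<longrightarrow> flagged_le s (c * \<tau> a) (\<tau> b))"

definition arcs_on :: "'a set \<Rightarrow> 'a arc set \<Rightarrow> bool" where
  "arcs_on V A \<longleftrightarrow> (\<forall>a b c s. (a,b,c,s) \<in> A \<longrightarrow> a \<in> V \<and> b \<in> V \<and> 0 < c)"

lemma walks_subset:
  assumes "A \<subseteq> walks B" shows "walks A \<subseteq> walks B"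
proof clarify
  fix a b c s assume "(a,b,c,s) \<in> walks A"
  then show "(a,b,c,s) \<in> walks B"
    by (induction rule: walks_induct) (use assms in \<open>auto intro: walks.append\<close>)
qed

text \<open>Fourier--Motzkin elimination of the vertex \<open>x\<close>.\<close>

definition eliminate :: "'a \<Rightarrow> 'a arc set \<Rightarrow> 'a arc set" where
  "eliminate x A = {(a,b,c,s) \<in> A. a \<noteq> x \<and> b \<noteq> x} \<union>
     {(a,d,c1*c2,s1\<or>s2) | a d c1 c2 s1 s2. (a,x,c1,s1) \<in> A \<and> (x,d,c2,s2) \<in> A \<and> a \<noteq> x \<and> d \<noteq> x}"

lemma finite_eliminate:
  assumes "finite A" shows "finite (eliminate x A)"
proof -
  let ?C = "{(a,d,c1*c2,s1\<or>s2) | a d c1 c2 s1 s2.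
              (a,x,c1,s1) \<in> A \<and> (x,d,c2,s2) \<in> A \<and> a \<noteq> x \<and> d \<noteq> x}"
  have "?C \<subseteq> (\<lambda>((a,_,c1,s1),(_,d,c2,s2)). (a,d,c1*c2,s1\<or>s2)) ` (A \<times> A)"
    by (force intro!: image_eqI)
  then have "finite ?C"
    by (rule finite_subset) (use assms in simp)
  moreover have "finite {(a,b,c,s) \<in> A. a \<noteq> x \<and> b \<noteq> x}"
    using assms by (rule rev_finite_subset) (rule subsetI, clarify)
  ultimately show ?thesis
    unfolding eliminate_def finite_Un by blast
qed

lemma eliminate_subset_walks: "eliminate x A \<subseteq> walks A"
  unfolding eliminate_def by (blast intro: walks.arc walks.append)

lemma nonexpanding_cycles_eliminate:
  "nonexpanding_cycles A \<Longrightarrow> nonexpanding_cycles (eliminate x A)"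
  using walks_subset[OF eliminate_subset_walks[of x A]] unfolding nonexpanding_cycles_def by blast

lemma arcs_on_eliminate:
  assumes "arcs_on (insert x V) A" shows "arcs_on V (eliminate x A)"
  unfolding arcs_on_def
proof (intro allI impI)
  fix a b c s assume "(a,b,c,s) \<in> eliminate x A"
  then consider "(a,b,c,s) \<in> A" "a \<noteq> x" "b \<noteq> x"
    | c1 c2 s1 s2 where "c = c1 * c2" "(a,x,c1,s1) \<in> A" "(x,b,c2,s2) \<in> A" "a \<noteq> x" "b \<noteq> x"
    unfolding eliminate_def by blast
  then show "a \<in> V \<and> b \<in> V \<and> 0 < c"
    using assms unfolding arcs_on_def by cases (blast, blast intro: mult_pos_pos)
qed

lemma exists_pos_between:
  fixes L U :: "(real \<times> bool) set"
  assumes fin: "finite L" "finite U" and U_pos: "\<forall>(u,s)\<in>U. 0 < u"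
    and compat: "\<forall>(l,sl)\<in>L. \<forall>(u,su)\<in>U. flagged_le (sl \<or> su) l u"
  obtains t where "0 < t" "\<forall>(l,s)\<in>L. flagged_le s l t" "\<forall>(u,s)\<in>U. flagged_le s t u"
proof -
  define lo where "lo = Max (insert 0 (fst ` L))"
  define hi where "hi = Min (insert (lo + 1) (fst ` U))"
  have lo_in: "lo \<in> insert 0 (fst ` L)" unfolding lo_def using fin by (intro Max_in) auto
  have hi_in: "hi \<in> insert (lo + 1) (fst ` U)" unfolding hi_def using fin by (intro Min_in) auto
  have lo_ge: "l \<le> lo" if "(l,s) \<in> L" for l s
    unfolding lo_def using fin that by (intro Max_ge) force+
  have hi_le: "hi \<le> u" if "(u,s) \<in> U" for u s
    unfolding hi_def using fin that by (intro Min_le) force+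
  have "0 \<le> lo" unfolding lo_def using fin by simp
  have "lo \<le> hi"
    using lo_in hi_in U_pos compat by (fastforce simp: flagged_le_def)
  show ?thesis
  proof (cases "lo < hi")
    case True
    show ?thesis
    proof (rule that[of "(lo + hi) / 2"])
      show "\<forall>(l,s)\<in>L. flagged_le s l ((lo + hi) / 2)"
        using lo_ge True by (fastforce simp: flagged_le_def)
      show "\<forall>(u,s)\<in>U. flagged_le s ((lo + hi) / 2) u"
        using hi_le True by (fastforce simp: flagged_le_def)
    qed (use True \<open>0 \<le> lo\<close> in simp)
  next
    case False
    with \<open>lo \<le> hi\<close> have "lo = hi" by simp
    with hi_in obtain s0 where s0: "(hi, s0) \<in> U" by auto
    with U_pos \<open>lo = hi\<close> have "0 < lo" by auto
    with lo_in obtain s1 where s1: "(lo, s1) \<in> L" by auto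
    show ?thesis
    proof (rule that[of lo])
      show "\<forall>(l,s)\<in>L. flagged_le s l lo"
        using lo_ge compat s0 \<open>lo = hi\<close> by (fastforce simp: flagged_le_def)
      show "\<forall>(u,s)\<in>U. flagged_le s lo u"
        using hi_le compat s1 \<open>lo = hi\<close> by (fastforce simp: flagged_le_def)
    qed (use \<open>0 < lo\<close> in simp)
  qed
qed

lemma potential_extend:
  assumes "finite A" and pos: "\<And>a b c s. (a,b,c,s) \<in> A \<Longrightarrow> 0 < c"
    and cyc: "nonexpanding_cycles A"
    and pot: "is_potential \<tau> (eliminate x A)" and \<tau>_pos: "\<forall>y. 0 < \<tau> y"
  obtains t where "0 < t" "is_potential (\<tau>(x := t)) A"
proof -
  define L where "L = (\<lambda>(a,b,c,s). (c * \<tau> a, s)) ` {(a,b,c,s) \<in> A. b = x \<and> a \<noteq> x}"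
  define U where "U = (\<lambda>(a,b,c,s). (\<tau> b / c, s)) ` {(a,b,c,s) \<in> A. a = x \<and> b \<noteq> x}"
  have "{(a,b,c,s) \<in> A. b = x \<and> a \<noteq> x} \<subseteq> A" "{(a,b,c,s) \<in> A. a = x \<and> b \<noteq> x} \<subseteq> A"
    by auto
  then have fin: "finite L" "finite U"
    unfolding L_def U_def using \<open>finite A\<close> by (meson finite_imageI finite_subset)+
  have U_pos: "\<forall>(u,s)\<in>U. 0 < u"
    unfolding U_def using pos \<tau>_pos by force
  \<comment> \<open>\<open>L\<close> and \<open>U\<close> are the lower and upper bounds on \<open>\<tau> x\<close>; each pair of them is consistent
     because it composes to an arc of \<open>eliminate x A\<close>.\<close>
  have compat: "\<forall>(l,sl)\<in>L. \<forall>(u,su)\<in>U. flagged_le (sl \<or> su) l u"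
  proof (clarsimp simp: L_def U_def)
    fix a c1 sl b c2 su
    assume "(a,x,c1,sl) \<in> A" "a \<noteq> x" "(x,b,c2,su) \<in> A" "b \<noteq> x"
    then have "(a,b,c1*c2,sl\<or>su) \<in> eliminate x A" unfolding eliminate_def by blast
    then have "flagged_le (sl\<or>su) (c1 * c2 * \<tau> a) (\<tau> b)"
      using pot unfolding is_potential_def by blast
    then have "flagged_le (sl\<or>su) (c2 * (c1 * \<tau> a)) (\<tau> b)"
      by (simp add: mult_ac)
    then show "flagged_le (sl\<or>su) (c1 * \<tau> a) (\<tau> b / c2)"
      using flagged_le_mult_left_iff pos[OF \<open>(x,b,c2,su) \<in> A\<close>] by blast
  qed
  obtain t where t: "0 < t" "\<forall>(l,s)\<in>L. flagged_le s l t" "\<forall>(u,s)\<in>U. flagged_le s t u"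
    using exists_pos_between[OF fin U_pos compat] by blast
  have "is_potential (\<tau>(x := t)) A"
    unfolding is_potential_def
  proof (intro allI impI)
    fix a b c s assume e: "(a,b,c,s) \<in> A"
    consider "a = x" "b = x" | "a = x" "b \<noteq> x" | "a \<noteq> x" "b = x" | "a \<noteq> x" "b \<noteq> x"
      by blast
    then show "flagged_le s (c * (\<tau>(x := t)) a) ((\<tau>(x := t)) b)"
    proof cases
      case 1
      with e have "(x,x,c,s) \<in> walks A" by (auto intro: walks.arc)
      with cyc have "flagged_le s c 1" unfolding nonexpanding_cycles_def by blast
      with 1 t(1) show ?thesis using flagged_le_mult_right_iff[of t s c 1] by simp
    next
      case 2
      with e have "(\<tau> b / c, s) \<in> U" unfolding U_def by force
      with t(3) have "flagged_le s t (\<tau> b / c)" by blast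
      with 2 pos[OF e] show ?thesis using flagged_le_mult_left_iff by simp
    next
      case 3
      with e have "(c * \<tau> a, s) \<in> L" unfolding L_def by force
      with 3 t(2) show ?thesis by auto
    next
      case 4
      with e have "(a,b,c,s) \<in> eliminate x A" unfolding eliminate_def by blast
      with 4 pot show ?thesis unfolding is_potential_def by simp
    qed
  qed
  with t(1) that show ?thesis by blast
qed

lemma nonexpanding_cycles_imp_potential:
  assumes "finite V" "finite A" "arcs_on V A" "nonexpanding_cycles A"
  shows "\<exists>\<tau>. (\<forall>y. 0 < \<tau> y) \<and> is_potential \<tau> A"
  using assms
proof (induction V arbitrary: A rule: finite_induct)
  case empty
  then have "A = {}" unfolding arcs_on_def by fast
  then show ?case unfolding is_potential_def by (intro exI[of _ "\<lambda>_. 1"]) simp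
next
  case (insert x V)
  obtain \<tau> where \<tau>_pos: "\<forall>y. 0 < \<tau> y" and \<tau>: "is_potential \<tau> (eliminate x A)"
    using insert.IH[OF finite_eliminate arcs_on_eliminate nonexpanding_cycles_eliminate]
      insert.prems by blast
  have pos: "\<And>a b c s. (a,b,c,s) \<in> A \<Longrightarrow> 0 < c"
    using \<open>arcs_on (insert x V) A\<close> unfolding arcs_on_def by blast
  obtain t where "0 < t" "is_potential (\<tau>(x := t)) A"
    by (rule potential_extend[OF \<open>finite A\<close> pos \<open>nonexpanding_cycles A\<close> \<tau> \<tau>_pos])
  moreover from \<open>0 < t\<close> \<tau>_pos have "\<forall>y. 0 < (\<tau>(x := t)) y" by simp
  ultimately show ?case by blast
qed

lemma cons_graph_subset: "cons_graph n m z \<subseteq> {..<n} \<times> {..<m}"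
  unfolding cons_graph_def by auto

lemma finite_cons_graph: "finite (cons_graph n m z)"
  using cons_graph_subset by (rule finite_subset) simp

lemma exists_max_support:
  assumes "Q z0"
  obtains z where "Q z" "\<And>y. Q y \<Longrightarrow> card (cons_graph n m y) \<le> card (cons_graph n m z)"
proof -
  have "card (cons_graph n m y) < n * m + 1" for y
    using card_mono[OF _ cons_graph_subset, of n m y] by (simp add: card_cartesian_product)
  then show ?thesis
    using ex_has_greatest_nat[of Q z0 "\<lambda>y. card (cons_graph n m y)" "n * m + 1"] assms that
    by blast
qed

lemma pareto_optimal_same_profile:
  assumes "pareto_optimal n m v z" "allocation n m z'" "profile n m v z' = profile n m v z"
  shows "pareto_optimal n m v z'"
  using assms unfolding pareto_optimal_def by simp

text \<open>A trade is a direction in which any allocation with support \<open>S\<close> can move for a short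
  time, giving agent \<open>a\<close> one unit of utility at the cost of \<open>1/c\<close> units for agent \<open>b\<close>.\<close>

definition trade :: "nat \<Rightarrow> nat \<Rightarrow> (nat \<Rightarrow> nat \<Rightarrow> real) \<Rightarrow> (nat \<times> nat) set \<Rightarrow>
    nat \<Rightarrow> nat \<Rightarrow> real \<Rightarrow> bool \<Rightarrow> (nat \<Rightarrow> nat \<Rightarrow> real) \<Rightarrow> bool" where
  "trade n m v S a b c s \<Delta> \<longleftrightarrow> a < n \<and> b < n \<and> 0 < c \<and>
     (\<forall>j<m. (\<Sum>i<n. \<Delta> i j) = 0) \<and>
     (\<forall>i<n. \<forall>j<m. (i,j) \<notin> S \<longrightarrow> 0 \<le> \<Delta> i j) \<and>
     (\<forall>k<n. (\<Sum>j<m. v k j * \<Delta> k j) = (if k = a then 1 else 0) - (if k = b then 1 / c else 0)) \<and>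
     (s \<longrightarrow> (\<exists>i<n. \<exists>j<m. (i,j) \<notin> S \<and> 0 < \<Delta> i j))"

lemma trade_single_chore:
  assumes neg: "\<forall>i<n. \<forall>j<m. v i j < 0" and ij: "(i,j) \<in> S" "i < n" "j < m" and "i' < n"
  shows "\<exists>\<Delta>. trade n m v S i i' (\<bar>v i j\<bar> / \<bar>v i' j\<bar>) ((i',j) \<notin> S) \<Delta>"
proof -
  have vij: "v i j < 0" and vi'j: "v i' j < 0" using neg ij \<open>i' < n\<close> by auto
  define \<Delta> where "\<Delta> = (\<lambda>k l. if l = j then ((if k = i' then 1 else 0) - (if k = i then 1 else 0)) / \<bar>v i j\<bar>
                              else (0::real))"
  have "(\<Sum>k<n. \<Delta> k l) = 0" for l
    using ij \<open>i' < n\<close>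
    by (cases "l = j") (simp_all add: \<Delta>_def sum_subtractf flip: sum_divide_distrib)
  moreover have "0 \<le> \<Delta> k l" if "(k,l) \<notin> S" for k l
    using that ij by (auto simp: \<Delta>_def)
  moreover have "(\<Sum>l<m. v k l * \<Delta> k l)
      = (if k = i then 1 else 0) - (if k = i' then 1 / (\<bar>v i j\<bar> / \<bar>v i' j\<bar>) else 0)" for k
  proof -
    have "(\<Sum>l<m. v k l * \<Delta> k l) = v k j * (((if k = i' then 1 else 0) - (if k = i then 1 else 0)) / \<bar>v i j\<bar>)"
      using ij by (simp add: \<Delta>_def if_distrib[of "\<lambda>x. v k _ * x"] cong: if_cong)
    also have "\<dots> = (if k = i then 1 else 0) - (if k = i' then 1 / (\<bar>v i j\<bar> / \<bar>v i' j\<bar>) else 0)"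
      using vij vi'j by (cases "k = i"; cases "k = i'") (auto simp: field_simps)
    finally show ?thesis .
  qed
  moreover have "0 < \<Delta> i' j" if "(i',j) \<notin> S"
    using that ij vij by (auto simp: \<Delta>_def)
  moreover have "0 < \<bar>v i j\<bar> / \<bar>v i' j\<bar>"
    using vij vi'j by (simp add: divide_neg_neg)
  ultimately show ?thesis
    unfolding trade_def using ij \<open>i' < n\<close> by (intro exI[of _ \<Delta>]) auto
qed

lemma trade_compose:
  assumes t1: "trade n m v S a b c1 s1 \<Delta>1" and t2: "trade n m v S b d c2 s2 \<Delta>2"
  shows "trade n m v S a d (c1 * c2) (s1 \<or> s2) (\<lambda>i j. \<Delta>1 i j + \<Delta>2 i j / c1)"
proof -
  have "a < n" "d < n" and c1: "0 < c1" and c2: "0 < c2"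
    and col1: "\<And>j. j < m \<Longrightarrow> (\<Sum>i<n. \<Delta>1 i j) = 0"
    and col2: "\<And>j. j < m \<Longrightarrow> (\<Sum>i<n. \<Delta>2 i j) = 0"
    and o1: "\<And>i j. i < n \<Longrightarrow> j < m \<Longrightarrow> (i,j) \<notin> S \<Longrightarrow> 0 \<le> \<Delta>1 i j"
    and o2: "\<And>i j. i < n \<Longrightarrow> j < m \<Longrightarrow> (i,j) \<notin> S \<Longrightarrow> 0 \<le> \<Delta>2 i j"
    and u1: "\<And>k. k < n \<Longrightarrow> (\<Sum>j<m. v k j * \<Delta>1 k j) = (if k = a then 1 else 0) - (if k = b then 1/c1 else 0)"
    and u2: "\<And>k. k < n \<Longrightarrow> (\<Sum>j<m. v k j * \<Delta>2 k j) = (if k = b then 1 else 0) - (if k = d then 1/c2 else 0)"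
    and s1: "s1 \<Longrightarrow> \<exists>i<n. \<exists>j<m. (i,j) \<notin> S \<and> 0 < \<Delta>1 i j"
    and s2: "s2 \<Longrightarrow> \<exists>i<n. \<exists>j<m. (i,j) \<notin> S \<and> 0 < \<Delta>2 i j"
    using t1 t2 unfolding trade_def by blast+
  have "(\<Sum>i<n. \<Delta>1 i j + \<Delta>2 i j / c1) = 0" if "j < m" for j
    using col1[OF that] col2[OF that] by (simp add: sum.distrib flip: sum_divide_distrib)
  moreover have "0 \<le> \<Delta>1 i j + \<Delta>2 i j / c1" if "i < n" "j < m" "(i,j) \<notin> S" for i j
    using o1[OF that] o2[OF that] c1 by simp
  moreover have "(\<Sum>j<m. v k j * (\<Delta>1 k j + \<Delta>2 k j / c1))
      = (if k = a then 1 else 0) - (if k = d then 1 / (c1 * c2) else 0)" if "k < n" for k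
  proof -
    have "(\<Sum>j<m. v k j * (\<Delta>1 k j + \<Delta>2 k j / c1))
        = (\<Sum>j<m. v k j * \<Delta>1 k j) + (\<Sum>j<m. v k j * \<Delta>2 k j) / c1"
      by (simp add: distrib_left sum.distrib sum_divide_distrib)
    also have "\<dots> = ((if k = a then 1 else 0) - (if k = b then 1/c1 else 0))
                    + ((if k = b then 1 else 0) - (if k = d then 1/c2 else 0)) / c1"
      using u1[OF that] u2[OF that] by simp
    also have "\<dots> = (if k = a then 1 else 0) - (if k = d then 1 / (c1 * c2) else 0)"
      using c1 c2 by (cases "k = a"; cases "k = b"; cases "k = d") (simp_all add: field_simps)
    finally show ?thesis .
  qed
  moreover have "\<exists>i<n. \<exists>j<m. (i,j) \<notin> S \<and> 0 < \<Delta>1 i j + \<Delta>2 i j / c1" if "s1 \<or> s2"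
    using that
  proof
    assume s1
    then obtain i j where "i < n" "j < m" "(i,j) \<notin> S" "0 < \<Delta>1 i j" using s1 by blast
    with o2 c1 show ?thesis by (meson add_pos_nonneg divide_nonneg_pos)
  next
    assume s2
    then obtain i j where "i < n" "j < m" "(i,j) \<notin> S" "0 < \<Delta>2 i j" using s2 by blast
    with o1 c1 show ?thesis by (meson add_nonneg_pos divide_pos_pos)
  qed
  ultimately show ?thesis
    unfolding trade_def using \<open>a < n\<close> \<open>d < n\<close> c1 c2 by simp
qed

text \<open>An arc \<open>i \<rightarrow> i'\<close> records that agent \<open>i\<close>, who consumes chore \<open>j\<close>, can pass some of it to
  \<open>i'\<close>. When \<open>S\<close> is the support of an allocation, the potentials for these arcs are exactly
  the weightings \<open>\<tau>\<close> with \<open>G\<^sub>\<tau>(v) = S\<close>.\<close>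

definition exchange_arcs :: "nat \<Rightarrow> (nat \<Rightarrow> nat \<Rightarrow> real) \<Rightarrow> (nat \<times> nat) set \<Rightarrow> nat arc set" where
  "exchange_arcs n v S = {(i, i', \<bar>v i j\<bar> / \<bar>v i' j\<bar>, (i',j) \<notin> S) | i i' j. (i,j) \<in> S \<and> i' < n}"

lemma finite_exchange_arcs:
  assumes "finite S" shows "finite (exchange_arcs n v S)"
proof -
  have "exchange_arcs n v S = (\<lambda>((i,j),i'). (i, i', \<bar>v i j\<bar> / \<bar>v i' j\<bar>, (i',j) \<notin> S)) ` (S \<times> {..<n})"
    unfolding exchange_arcs_def by force
  with assms show ?thesis by simp
qed

lemma arcs_on_exchange_arcs:
  assumes neg: "\<forall>i<n. \<forall>j<m. v i j < 0" and S: "S \<subseteq> {..<n} \<times> {..<m}"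
  shows "arcs_on {..<n} (exchange_arcs n v S)"
  unfolding arcs_on_def exchange_arcs_def
proof (clarify, intro conjI)
  fix i i' j assume "(i,j) \<in> S" "i' < n"
  with S have "i < n" "j < m" by auto
  with neg \<open>i' < n\<close> have "v i j < 0" "v i' j < 0" by auto
  then show "0 < \<bar>v i j\<bar> / \<bar>v i' j\<bar>" by (simp add: divide_neg_neg)
qed (use S in auto)

lemma walks_exchange_arcs_trade:
  assumes neg: "\<forall>i<n. \<forall>j<m. v i j < 0" and S: "S \<subseteq> {..<n} \<times> {..<m}"
    and "(a,b,c,s) \<in> walks (exchange_arcs n v S)"
  shows "\<exists>\<Delta>. trade n m v S a b c s \<Delta>"
  using assms(3)
proof (induction rule: walks_induct)
  case (arc a b c s)
  then obtain j where "(a,j) \<in> S" "b < n" "c = \<bar>v a j\<bar> / \<bar>v b j\<bar>" "s = ((b,j) \<notin> S)"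
    unfolding exchange_arcs_def by blast
  with S trade_single_chore[OF neg] show ?case by blast
next
  case (append a b c1 s1 d c2 s2)
  then show ?case using trade_compose by blast
qed

lemma exists_small_step:
  fixes z \<Delta> :: "'a \<Rightarrow> real"
  assumes "finite I" and nonneg: "\<forall>p\<in>I. 0 \<le> z p" and dec: "\<forall>p\<in>I. \<Delta> p < 0 \<longrightarrow> 0 < z p"
  obtains t where "0 < t" "\<forall>p\<in>I. 0 \<le> z p + t * \<Delta> p \<and> (0 < z p \<longrightarrow> 0 < z p + t * \<Delta> p)"
proof -
  define T where "T = insert 1 ((\<lambda>p. z p / (2 * - \<Delta> p)) ` {p \<in> I. \<Delta> p < 0})"
  have "finite T" unfolding T_def using \<open>finite I\<close> by simp
  define t where "t = Min T"
  have "0 < t"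
    unfolding t_def using \<open>finite T\<close> dec by (subst Min_gr_iff) (auto simp: T_def divide_pos_neg)
  moreover have "0 \<le> z p + t * \<Delta> p \<and> (0 < z p \<longrightarrow> 0 < z p + t * \<Delta> p)" if "p \<in> I" for p
  proof (cases "\<Delta> p < 0")
    case True
    then have "t \<le> z p / (2 * - \<Delta> p)"
      unfolding t_def using \<open>finite T\<close> that by (intro Min_le) (auto simp: T_def)
    moreover have "0 < 2 * - \<Delta> p" using True by simp
    ultimately have "t * (2 * - \<Delta> p) \<le> z p" using pos_le_divide_eq by blast
    moreover have "t * (2 * - \<Delta> p) = -2 * (t * \<Delta> p)" by simp
    moreover have "0 < z p" using True dec that by blast
    ultimately show ?thesis by linarith
  next
    case False
    with \<open>0 < t\<close> have "0 \<le> t * \<Delta> p" by simp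
    with nonneg that show ?thesis by auto
  qed
  ultimately show ?thesis using that by blast
qed

lemma trade_perturbation:
  assumes z: "allocation n m z" and tr: "trade n m v (cons_graph n m z) a b c s \<Delta>"
  obtains t z' where "0 < t" "allocation n m z'"
    "\<And>k. k < n \<Longrightarrow>
       profile n m v z' k = profile n m v z k + t * ((if k = a then 1 else 0) - (if k = b then 1 / c else 0))"
    "cons_graph n m z \<subseteq> cons_graph n m z'" "s \<Longrightarrow> cons_graph n m z \<noteq> cons_graph n m z'"
proof -
  let ?S = "cons_graph n m z"
  have nonneg: "\<forall>i<n. \<forall>j<m. 0 \<le> z i j" and col: "\<forall>j<m. (\<Sum>i<n. z i j) = 1"
    using z unfolding allocation_def by auto
  have dcol: "\<forall>j<m. (\<Sum>i<n. \<Delta> i j) = 0"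
    and out: "\<forall>i<n. \<forall>j<m. (i,j) \<notin> ?S \<longrightarrow> 0 \<le> \<Delta> i j"
    and util: "\<forall>k<n. (\<Sum>j<m. v k j * \<Delta> k j) = (if k = a then 1 else 0) - (if k = b then 1 / c else 0)"
    and grow: "s \<longrightarrow> (\<exists>i<n. \<exists>j<m. (i,j) \<notin> ?S \<and> 0 < \<Delta> i j)"
    using tr unfolding trade_def by blast+
  have "\<forall>p\<in>{..<n} \<times> {..<m}. case_prod \<Delta> p < 0 \<longrightarrow> 0 < case_prod z p"
    using out unfolding cons_graph_def by force
  then obtain t where "0 < t"
    and step: "\<forall>p\<in>{..<n} \<times> {..<m}. 0 \<le> case_prod z p + t * case_prod \<Delta> p
                  \<and> (0 < case_prod z p \<longrightarrow> 0 < case_prod z p + t * case_prod \<Delta> p)"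
    using exists_small_step[of "{..<n} \<times> {..<m}" "case_prod z" "case_prod \<Delta>"] nonneg by auto
  let ?z = "\<lambda>i j. z i j + t * \<Delta> i j"
  show ?thesis
  proof (rule that[OF \<open>0 < t\<close>, of ?z])
    have "(\<Sum>i<n. ?z i j) = (\<Sum>i<n. z i j) + t * (\<Sum>i<n. \<Delta> i j)" for j
      by (simp add: sum.distrib sum_distrib_left)
    with step col dcol show "allocation n m ?z"
      unfolding allocation_def by auto
  next
    fix k assume "k < n"
    have "bundle_util m v k (?z k) = bundle_util m v k (z k) + t * (\<Sum>j<m. v k j * \<Delta> k j)"
      unfolding bundle_util_def by (simp add: algebra_simps sum.distrib sum_distrib_left)
    with util \<open>k < n\<close> show "profile n m v ?z k
        = profile n m v z k + t * ((if k = a then 1 else 0) - (if k = b then 1 / c else 0))"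
      unfolding profile_def by simp
  next
    show "?S \<subseteq> cons_graph n m ?z"
      using step unfolding cons_graph_def by auto
  next
    assume s
    with grow obtain i j where "i < n" "j < m" "(i,j) \<notin> ?S" "0 < \<Delta> i j" by blast
    with nonneg \<open>0 < t\<close> have "(i,j) \<in> cons_graph n m ?z"
      unfolding cons_graph_def by (simp add: add_nonneg_pos)
    with \<open>(i,j) \<notin> ?S\<close> show "?S \<noteq> cons_graph n m ?z" by blast
  qed
qed

lemma max_support_nonexpanding_cycles:
  assumes neg: "\<forall>i<n. \<forall>j<m. v i j < 0" and po: "pareto_optimal n m v z"
    and max: "\<And>y. allocation n m y \<Longrightarrow> profile n m v y = profile n m v z \<Longrightarrow>
                card (cons_graph n m y) \<le> card (cons_graph n m z)"
  shows "nonexpanding_cycles (exchange_arcs n v (cons_graph n m z))"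
  unfolding nonexpanding_cycles_def
proof (intro allI impI)
  fix a c s assume "(a,a,c,s) \<in> walks (exchange_arcs n v (cons_graph n m z))"
  then obtain \<Delta> where tr: "trade n m v (cons_graph n m z) a a c s \<Delta>"
    using walks_exchange_arcs_trade[OF neg cons_graph_subset] by blast
  then have "a < n" unfolding trade_def by blast
  have z: "allocation n m z" using po unfolding pareto_optimal_def by blast
  obtain t z' where "0 < t" and z': "allocation n m z'"
    and prof: "\<And>k. k < n \<Longrightarrow> profile n m v z' k
                  = profile n m v z k + t * ((if k = a then 1 else 0) - (if k = a then 1 / c else 0))"
    and sub: "cons_graph n m z \<subseteq> cons_graph n m z'"
    and grow: "s \<Longrightarrow> cons_graph n m z \<noteq> cons_graph n m z'"
    using trade_perturbation[OF z tr] by blast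
  show "flagged_le s c 1"
  proof (rule ccontr)
    assume "\<not> flagged_le s c 1"
    then consider "1 < c" | "c = 1" s unfolding flagged_le_def by fastforce
    then show False
    proof cases
      case 1
      then have gain: "0 < t * (1 - 1 / c)" using \<open>0 < t\<close> by simp
      then have "\<forall>k<n. profile n m v z k \<le> profile n m v z' k"
        using prof by (simp split: if_splits)
      moreover have "profile n m v z a < profile n m v z' a"
        using prof[OF \<open>a < n\<close>] gain by simp
      ultimately show False
        using po z' \<open>a < n\<close> unfolding pareto_optimal_def by blast
    next
      case 2
      have "profile n m v z' = profile n m v z"
        using prof \<open>c = 1\<close> by (auto simp: profile_def)
      with max z' have "card (cons_graph n m z') \<le> card (cons_graph n m z)" by blast
      moreover have "card (cons_graph n m z) < card (cons_graph n m z')"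
        using sub grow[OF \<open>s\<close>] finite_cons_graph by (intro psubset_card_mono) auto
      ultimately show False by simp
    qed
  qed
qed

lemma flagged_le_ratio_iff:
  "0 < q \<Longrightarrow> flagged_le s (p / q * x) y \<longleftrightarrow> flagged_le s (x * p) (y * q)"
  by (auto simp: flagged_le_def divide_le_eq divide_less_eq mult.commute)

lemma potential_exchange_arcs_tau_graph:
  assumes neg: "\<forall>i<n. \<forall>j<m. v i j < 0" and z: "allocation n m z"
    and pot: "is_potential \<tau> (exchange_arcs n v (cons_graph n m z))"
  shows "tau_graph n m \<tau> v = cons_graph n m z"
proof -
  let ?S = "cons_graph n m z"
  have ineq: "flagged_le ((i',j) \<notin> ?S) (\<tau> i * \<bar>v i j\<bar>) (\<tau> i' * \<bar>v i' j\<bar>)"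
    if "(i,j) \<in> ?S" "i' < n" for i j i'
  proof -
    have "(i, i', \<bar>v i j\<bar> / \<bar>v i' j\<bar>, (i',j) \<notin> ?S) \<in> exchange_arcs n v ?S"
      unfolding exchange_arcs_def using that by blast
    with pot have "flagged_le ((i',j) \<notin> ?S) (\<bar>v i j\<bar> / \<bar>v i' j\<bar> * \<tau> i) (\<tau> i')"
      unfolding is_potential_def by blast
    moreover have "0 < \<bar>v i' j\<bar>" using neg that unfolding cons_graph_def by force
    ultimately show ?thesis using flagged_le_ratio_iff by blast
  qed
  show ?thesis
  proof (intro equalityI subsetI)
    fix p assume "p \<in> ?S"
    with ineq show "p \<in> tau_graph n m \<tau> v"
      unfolding tau_graph_def flagged_le_def by (auto simp: cons_graph_def)
  next
    fix p assume "p \<in> tau_graph n m \<tau> v"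
    then obtain k j where p: "p = (k,j)" "k < n" "j < m"
      and min: "\<forall>i'<n. \<tau> k * \<bar>v k j\<bar> \<le> \<tau> i' * \<bar>v i' j\<bar>"
      unfolding tau_graph_def by auto
    have "\<exists>i<n. 0 < z i j"
    proof (rule ccontr)
      assume "\<not> (\<exists>i<n. 0 < z i j)"
      then have "(\<Sum>i<n. z i j) \<le> 0" by (intro sum_nonpos) auto
      with z \<open>j < m\<close> show False unfolding allocation_def by simp
    qed
    then obtain i where "i < n" "(i,j) \<in> ?S" using \<open>j < m\<close> unfolding cons_graph_def by blast
    with ineq[of i j k] min p show "p \<in> ?S" unfolding flagged_le_def by force
  qed
qed

lemma PO_profile_MWW_allocation:
  assumes neg: "\<forall>i<n. \<forall>j<m. v i j < 0" and "u \<in> PO_profiles n m v"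
  shows "\<exists>z. allocation n m z \<and> profile n m v z = u \<and> cons_graph n m z \<in> MWW n m v"
proof -
  obtain z0 where po0: "pareto_optimal n m v z0" and u: "u = profile n m v z0"
    using assms(2) unfolding PO_profiles_def by blast
  have "allocation n m z0" using po0 unfolding pareto_optimal_def by blast
  then obtain z where z: "allocation n m z" "profile n m v z = u"
    and max: "\<And>y. allocation n m y \<and> profile n m v y = u \<Longrightarrow>
                card (cons_graph n m y) \<le> card (cons_graph n m z)"
    using exists_max_support[of "\<lambda>y. allocation n m y \<and> profile n m v y = u" z0] u by blast
  have po: "pareto_optimal n m v z"
    using pareto_optimal_same_profile[OF po0 z(1)] z(2) u by simp
  have "nonexpanding_cycles (exchange_arcs n v (cons_graph n m z))"
    using max_support_nonexpanding_cycles[OF neg po] max z(2) by blast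
  then obtain \<tau> where "\<forall>i. 0 < \<tau> i" "is_potential \<tau> (exchange_arcs n v (cons_graph n m z))"
    using nonexpanding_cycles_imp_potential[OF finite_lessThan
        finite_exchange_arcs[OF finite_cons_graph] arcs_on_exchange_arcs[OF neg cons_graph_subset]]
    by blast
  then have "cons_graph n m z \<in> MWW n m v"
    using potential_exchange_arcs_tau_graph[OF neg z(1)] unfolding MWW_def by auto
  with z show ?thesis by blast
qed

definition competitive_prices ::
    "nat \<Rightarrow> nat \<Rightarrow> (nat \<Rightarrow> nat \<Rightarrow> real) \<Rightarrow> (nat \<Rightarrow> real) \<Rightarrow> (nat \<Rightarrow> nat \<Rightarrow> real) \<Rightarrow> (nat \<Rightarrow> real) \<Rightarrow> bool" where
  "competitive_prices n m v b z p \<longleftrightarrow> (\<forall>j<m. p j < 0) \<and>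
     (\<forall>i<n. (\<Sum>j<m. p j * z i j) \<le> b i \<and>
        (\<forall>x. (\<forall>j<m. 0 \<le> x j) \<and> (\<Sum>j<m. p j * x j) \<le> b i \<longrightarrow>
             bundle_util m v i x \<le> bundle_util m v i (z i)))"

lemma competitive_iff:
  "competitive n m v b z \<longleftrightarrow> allocation n m z \<and> (\<exists>p. competitive_prices n m v b z p)"
  unfolding competitive_def competitive_prices_def by (simp add: le_less)

lemma allocation_total_spend:
  assumes "allocation n m y"
  shows "(\<Sum>i<n. \<Sum>j<m. p j * y i j) = (\<Sum>j<m. p j)"
proof -
  have "(\<Sum>i<n. \<Sum>j<m. p j * y i j) = (\<Sum>j<m. p j * (\<Sum>i<n. y i j))"
    by (simp add: sum.swap[of _ "{..<n}"] sum_distrib_left)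
  also have "\<dots> = (\<Sum>j<m. p j)"
    using assms unfolding allocation_def by simp
  finally show ?thesis .
qed

text \<open>A bundle costing less than the (negative) budget can be scaled down by
  \<open>budget / cost \<in> (0, 1)\<close>, remaining affordable while doing strictly fewer chores.\<close>

lemma budget_le_spend:
  fixes p x :: "nat \<Rightarrow> real"
  assumes p: "\<forall>j<m. p j < 0" and "\<beta> < 0" and v: "\<forall>j<m. v i j < 0"
    and opt: "\<forall>x. (\<forall>j<m. 0 \<le> x j) \<and> (\<Sum>j<m. p j * x j) \<le> \<beta> \<longrightarrow> bundle_util m v i x \<le> U"
    and x: "\<forall>j<m. 0 \<le> x j" and "U \<le> bundle_util m v i x"
  shows "\<beta> \<le> (\<Sum>j<m. p j * x j)"
proof (rule ccontr)
  define P where "P = (\<Sum>j<m. p j * x j)"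
  assume "\<not> \<beta> \<le> (\<Sum>j<m. p j * x j)"
  then have "P < \<beta>" unfolding P_def by simp
  have "\<exists>j<m. 0 < x j"
  proof (rule ccontr)
    assume "\<not> (\<exists>j<m. 0 < x j)"
    with x have "\<forall>j<m. x j = 0" by force
    then have "P = 0" unfolding P_def by simp
    with \<open>P < \<beta>\<close> \<open>\<beta> < 0\<close> show False by simp
  qed
  then obtain j0 where "j0 < m" "0 < x j0" by blast
  have "bundle_util m v i x < (\<Sum>j<m. 0)"
    unfolding bundle_util_def
  proof (rule sum_strict_mono_ex1)
    show "\<forall>j\<in>{..<m}. v i j * x j \<le> 0" using v x by (auto simp: mult_nonpos_nonneg)
    show "\<exists>j\<in>{..<m}. v i j * x j < 0" using v \<open>j0 < m\<close> \<open>0 < x j0\<close> by (intro bexI[of _ j0]) (auto simp: mult_neg_pos)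
  qed simp
  define s where "s = \<beta> / P"
  have "0 < s" "s < 1"
    unfolding s_def using \<open>P < \<beta>\<close> \<open>\<beta> < 0\<close> by (simp_all add: divide_neg_neg divide_less_eq)
  have "(\<Sum>j<m. p j * (s * x j)) = s * P"
    unfolding P_def by (simp add: sum_distrib_left mult.left_commute)
  also have "\<dots> = \<beta>"
    unfolding s_def using \<open>P < \<beta>\<close> \<open>\<beta> < 0\<close> by simp
  finally have "bundle_util m v i (\<lambda>j. s * x j) \<le> U"
    using opt x \<open>0 < s\<close> by simp
  moreover have "bundle_util m v i (\<lambda>j. s * x j) = s * bundle_util m v i x"
    unfolding bundle_util_def by (simp add: sum_distrib_left mult.left_commute)
  moreover have "bundle_util m v i x < s * bundle_util m v i x"
    using \<open>s < 1\<close> \<open>bundle_util m v i x < (\<Sum>j<m. 0)\<close> by (simp add: mult_less_cancel_right2)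
  ultimately show False using \<open>U \<le> bundle_util m v i x\<close> by simp
qed

lemma competitive_prices_dominating_spend:
  assumes neg: "\<forall>i<n. \<forall>j<m. v i j < 0" and bneg: "\<forall>i<n. b i < 0"
    and z: "allocation n m z" and p: "competitive_prices n m v b z p"
    and y: "allocation n m y" and dom: "\<forall>i<n. profile n m v z i \<le> profile n m v y i"
  shows "\<forall>i<n. (\<Sum>j<m. p j * y i j) = b i"
proof -
  have p_neg: "\<forall>j<m. p j < 0" and within: "\<forall>i<n. (\<Sum>j<m. p j * z i j) \<le> b i"
    and opt: "\<forall>i<n. \<forall>x. (\<forall>j<m. 0 \<le> x j) \<and> (\<Sum>j<m. p j * x j) \<le> b i \<longrightarrow>
                        bundle_util m v i x \<le> bundle_util m v i (z i)"
    using p unfolding competitive_prices_def by blast+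
  have budget_le: "b i \<le> (\<Sum>j<m. p j * x j)"
    if "i < n" "\<forall>j<m. 0 \<le> x j" "bundle_util m v i (z i) \<le> bundle_util m v i x" for i x
  proof -
    from that(1) neg bneg have "b i < 0" "\<forall>j<m. v i j < 0" by auto
    moreover from that(1) opt have "\<forall>x. (\<forall>j<m. 0 \<le> x j) \<and> (\<Sum>j<m. p j * x j) \<le> b i \<longrightarrow>
                               bundle_util m v i x \<le> bundle_util m v i (z i)" by blast
    ultimately show ?thesis by (rule budget_le_spend[OF p_neg _ _ _ that(2,3)])
  qed
  have nonneg: "\<forall>j<m. 0 \<le> w i j" if "allocation n m w" "i < n" for w i
    using that unfolding allocation_def by blast
  have "(\<Sum>j<m. p j * z i j) = b i" if "i < n" for i
    using budget_le[OF that nonneg[OF z that] order_refl] within that by (meson order_antisym)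
  then have "(\<Sum>i<n. b i) = (\<Sum>j<m. p j)"
    using allocation_total_spend[OF z, of p] by simp
  also have "\<dots> = (\<Sum>i<n. \<Sum>j<m. p j * y i j)"
    using allocation_total_spend[OF y, of p] by simp
  finally have "(\<Sum>i<n. (\<Sum>j<m. p j * y i j) - b i) = 0"
    by (simp add: sum_subtractf)
  moreover have "0 \<le> (\<Sum>j<m. p j * y i j) - b i" if "i < n" for i
  proof -
    from dom that have "bundle_util m v i (z i) \<le> bundle_util m v i (y i)"
      unfolding profile_def by auto
    with budget_le[OF that nonneg[OF y that]] show ?thesis by simp
  qed
  ultimately show ?thesis
    using sum_nonneg_eq_0_iff[of "{..<n}" "\<lambda>i. (\<Sum>j<m. p j * y i j) - b i"] by simp
qed

lemma competitive_imp_pareto_optimal: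
  assumes neg: "\<forall>i<n. \<forall>j<m. v i j < 0" and bneg: "\<forall>i<n. b i < 0"
    and comp: "competitive n m v b z"
  shows "pareto_optimal n m v z"
proof -
  obtain p where z: "allocation n m z" and p: "competitive_prices n m v b z p"
    using comp unfolding competitive_iff by blast
  have "profile n m v y k \<le> profile n m v z k"
    if y: "allocation n m y" "\<forall>i<n. profile n m v z i \<le> profile n m v y i" and "k < n" for y k
  proof -
    have "(\<Sum>j<m. p j * y k j) = b k"
      using competitive_prices_dominating_spend[OF neg bneg z p y] \<open>k < n\<close> by blast
    with p y(1) \<open>k < n\<close> show ?thesis
      unfolding competitive_prices_def allocation_def profile_def by simp
  qed
  with z show ?thesis
    unfolding pareto_optimal_def by (meson not_le)
qed

lemma competitive_same_profile:
  assumes neg: "\<forall>i<n. \<forall>j<m. v i j < 0" and bneg: "\<forall>i<n. b i < 0"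
    and comp: "competitive n m v b z"
    and y: "allocation n m y" and same: "profile n m v y = profile n m v z"
  shows "competitive n m v b y"
proof -
  obtain p where z: "allocation n m z" and p: "competitive_prices n m v b z p"
    using comp unfolding competitive_iff by blast
  have "\<forall>i<n. (\<Sum>j<m. p j * y i j) = b i"
    using competitive_prices_dominating_spend[OF neg bneg z p y] same by simp
  moreover have "bundle_util m v i (y i) = bundle_util m v i (z i)" if "i < n" for i
    using fun_cong[OF same, of i] that unfolding profile_def by simp
  ultimately have "competitive_prices n m v b y p"
    using p unfolding competitive_prices_def by simp
  with y show ?thesis
    unfolding competitive_iff by blast
qed

theorem lemma2:
  fixes n m :: nat and v :: "nat \<Rightarrow> nat \<Rightarrow> real"
  assumes neg: "\<forall>i<n. \<forall>j<m. v i j < 0"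
  shows "(\<forall>u \<in> PO_profiles n m v. \<exists>z. allocation n m z \<and> profile n m v z = u
            \<and> cons_graph n m z \<in> MWW n m v)
       \<and> (\<forall>b. (\<forall>i<n. b i < 0) \<longrightarrow>
            (\<forall>u \<in> CU n m v b. \<exists>z. competitive n m v b z \<and> profile n m v z = u
               \<and> cons_graph n m z \<in> MWW n m v))"
proof (intro conjI allI impI ballI)
  fix u assume "u \<in> PO_profiles n m v"
  then show "\<exists>z. allocation n m z \<and> profile n m v z = u \<and> cons_graph n m z \<in> MWW n m v"
    using PO_profile_MWW_allocation[OF neg] by blast
next
  fix b u assume bneg: "\<forall>i<n. b i < 0" and "u \<in> CU n m v b"
  then obtain z where comp: "competitive n m v b z" and u: "u = profile n m v z"
    unfolding CU_def by blast
  then have "u \<in> PO_profiles n m v"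
    using competitive_imp_pareto_optimal[OF neg bneg] unfolding PO_profiles_def by blast
  then obtain y where y: "allocation n m y" "profile n m v y = u" "cons_graph n m y \<in> MWW n m v"
    using PO_profile_MWW_allocation[OF neg] by blast
  with competitive_same_profile[OF neg bneg comp] u
  show "\<exists>z. competitive n m v b z \<and> profile n m v z = u \<and> cons_graph n m z \<in> MWW n m v"
    by blast
qed

end
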